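(* Let $n\ge 2$ and let $q\ne 2$ be a prime power. Let $\xi$ be a generator of the multiplicative group ${\rm GF}(q)^\times$. Then ${\rm GL}(n,q)$ is generated by the two matrices $h_1(\xi)=\mathrm{diag}(\xi,1,\dots,1)$ and $x_{12}(1)\,w$, where $x_{12}(1)=I+E_{12}$ and $w$ is the $n\times n$ matrix with entry $1$ in position $(1,n)$, entry $-1$ in positions $(i+1,i)$ for $1\le i\le n-1$, and $0$ elsewhere. Explicitly, $x_{12}(1)w$ has first row $(-1,0,\dots,0,1)$, second row $(-1,0,\dots,0)$, and for $3\le i\le n$ its $i$-th row has $-1$ in column $i-1$ and zeros elsewhere. (For $n=2$ the generators are $\begin{pmatrix}\xi&0\\0&1\end{pmatrix}$ and $\begin{pmatrix}-1&1\\-1&0\end{pmatrix}$.)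
   Context: $E_{ij}$ denotes the square matrix with $1$ in position $(i,j)$ and $0$ elsewhere. For $\alpha\in{\rm GF}(q)$ and $i\ne j$, $x_{ij}(\alpha)=I+\alpha E_{ij}$; $h_i(\alpha)$ is the diagonal matrix obtained from the identity by replacing the $i$-th diagonal entry by $\alpha$. The matrix $w$ equals $w_1w_2\cdots w_{n-1}$, where $w_i$ is the permutation matrix of the transposition $(i,i+1)$ with its $(i+1,i)$ entry replaced by $-1$. *)

theory Defs
  imports "Jordan_Normal_Form.Matrix"
begin

text \<open>Matrices are n x n matrices of the JNF library; indices are 0-based,
 so paper position (i,j) is entry (i-1,j-1).\<close>

definition E_mat :: "nat \<Rightarrow> nat \<Rightarrow> nat \<Rightarrow> 'a::field mat" where
  "E_mat n i j = mat n n (\<lambda>(r,c). if r = i \<and> c = j then 1 else 0)"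

definition x_mat :: "nat \<Rightarrow> nat \<Rightarrow> nat \<Rightarrow> 'a::field \<Rightarrow> 'a mat" where
  "x_mat n i j \<alpha> = 1\<^sub>m n + \<alpha> \<cdot>\<^sub>m E_mat n i j"

definition h_mat :: "nat \<Rightarrow> nat \<Rightarrow> 'a::field \<Rightarrow> 'a mat" where
  "h_mat n i \<alpha> = mat n n (\<lambda>(r,c). if r = c then (if r = i then \<alpha> else 1) else 0)"

definition w_mat :: "nat \<Rightarrow> 'a::field mat" where
  "w_mat n = mat n n (\<lambda>(r,c). if r = 0 \<and> c = n - 1 then 1
                               else if r = c + 1 then -1 else 0)"

definition GL :: "nat \<Rightarrow> 'a::field mat set" where
  "GL n = {A \<in> carrier_mat n n. invertible_mat A}"

inductive_set gen_group :: "nat \<Rightarrow> 'a::field mat set \<Rightarrow> 'a mat set"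
  for n :: nat and S :: "'a mat set" where
  gen_one: "1\<^sub>m n \<in> gen_group n S"
| gen_mult: "A \<in> S \<Longrightarrow> B \<in> gen_group n S \<Longrightarrow> A * B \<in> gen_group n S"
| gen_inv_mult: "A \<in> S \<Longrightarrow> A' \<in> carrier_mat n n \<Longrightarrow> inverts_mat A A' \<Longrightarrow> inverts_mat A' A
     \<Longrightarrow> B \<in> gen_group n S \<Longrightarrow> A' * B \<in> gen_group n S"

end

theory Submission
  imports Defs "Jordan_Normal_Form.Determinant"
begin

text \<open>Write h for h_1(\<xi>) and b for x_12(1) w. The word h b\<inverse> h b h\<inverse> b\<inverse> h\<inverse> b equals the
  transvection x_n1(c) with c = (\<xi> - 1)^2 / \<xi>, and c \<noteq> 0 because \<xi> \<noteq> 1, i.e. q \<noteq> 2.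
  Conjugating by the powers of h, which are all the h_1(\<alpha>), gives every x_n1(\<gamma>); conjugating
  these by b gives every x_12(\<gamma>), so x_12(1) and hence w lie in the group. Conjugation by w shifts
  indices, x_i,i+1 to x_i+1,i+2 and h_i to h_i+1, and the commutators [x_ik(\<alpha>), x_kj(1)] = x_ij(\<alpha>)
  give all transvections. So the group contains all elementary matrices, and these generate
  GL(n,q) by Gauss-Jordan elimination.\<close>

section \<open>Invertible matrices and generated groups\<close>

lemma invertible_mat_iff_det_nonzero:
  assumes A: "(A :: 'a::field mat) \<in> carrier_mat n n"
  shows "invertible_mat A \<longleftrightarrow> det A \<noteq> 0"
proof
  assume "invertible_mat A"
  then obtain B where AB: "A * B = 1\<^sub>m n" and BA: "B * A = 1\<^sub>m (dim_row B)"
    using A unfolding invertible_mat_def inverts_mat_def by auto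
  have B: "B \<in> carrier_mat n n"
    using arg_cong[OF AB, of dim_col] arg_cong[OF BA, of dim_col] A by auto
  have "det B * det A = 1"
    using arg_cong[OF BA, of det] B by (simp add: det_mult[OF B A])
  then show "det A \<noteq> 0" by auto
next
  assume "det A \<noteq> 0"
  from det_non_zero_imp_unit[OF A this, of "()"]
  obtain B where "B \<in> carrier_mat n n" "A * B = 1\<^sub>m n" "B * A = 1\<^sub>m n"
    unfolding Units_def ring_mat_def by auto
  then show "invertible_mat A"
    using A unfolding invertible_mat_def inverts_mat_def by auto
qed

lemma GL_eq_det_nonzero: "GL n = {A \<in> carrier_mat n n. det A \<noteq> (0::'a::field)}"
  unfolding GL_def using invertible_mat_iff_det_nonzero by blast

lemma GL_if_right_inverse:
  assumes "A \<in> carrier_mat n n" "B \<in> carrier_mat n n" "A * B = 1\<^sub>m n"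
  shows "A \<in> (GL n :: 'a::field mat set)"
proof -
  have "det A * det B = 1"
    using arg_cong[OF assms(3), of det] by (simp add: det_mult[OF assms(1,2)])
  then show ?thesis using assms(1) by (auto simp: GL_eq_det_nonzero)
qed

lemma gen_group_subset_GL:
  assumes "S \<subseteq> GL n"
  shows "gen_group n S \<subseteq> (GL n :: 'a::field mat set)"
proof
  fix A assume "A \<in> gen_group n S"
  then show "A \<in> GL n"
  proof induction
    case gen_one
    show ?case by (simp add: GL_eq_det_nonzero)
  next
    case (gen_mult A B)
    then show ?case using assms by (auto simp: GL_eq_det_nonzero det_mult)
  next
    case (gen_inv_mult A A' B)
    have "det A' * det A = 1"
      using \<open>inverts_mat A' A\<close> gen_inv_mult(1,2) assms
      by (auto simp: inverts_mat_def GL_eq_det_nonzero simp flip: det_mult)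
    then show ?case using gen_inv_mult assms by (auto simp: GL_eq_det_nonzero det_mult)
  qed
qed

lemma gen_group_carrier:
  assumes "S \<subseteq> carrier_mat n n" "A \<in> gen_group n S"
  shows "A \<in> carrier_mat n n"
  using assms(2) by induction (use assms(1) in auto)

lemma gen_group_mult:
  assumes S: "S \<subseteq> carrier_mat n n"
    and "A \<in> gen_group n S" "C \<in> gen_group n (S :: 'a::field mat set)"
  shows "A * C \<in> gen_group n S"
  using assms(2)
proof induction
  case gen_one
  then show ?case using gen_group_carrier[OF S assms(3)] assms(3) by simp
next
  case (gen_mult A B)
  have "A * B * C = A * (B * C)"
    using gen_mult S gen_group_carrier[OF S] assms(3) by (intro assoc_mult_mat) auto
  then show ?case using gen_mult by (simp add: gen_group.gen_mult)
next
  case (gen_inv_mult A A' B)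
  have "A' * B * C = A' * (B * C)"
    using gen_inv_mult gen_group_carrier[OF S] assms(3) by (intro assoc_mult_mat) auto
  then show ?case using gen_inv_mult by (simp add: gen_group.gen_inv_mult)
qed

lemma gen_group_generator:
  assumes "S \<subseteq> carrier_mat n n" "A \<in> S"
  shows "A \<in> gen_group n S"
  using gen_group.gen_mult[OF assms(2) gen_group.gen_one, of n] assms by auto

lemma gen_group_generator_inverse:
  assumes "A \<in> S" "A \<in> carrier_mat n n" "A' \<in> carrier_mat n n"
    and "A * A' = 1\<^sub>m n" "A' * A = 1\<^sub>m n"
  shows "A' \<in> gen_group n S"
  using gen_group.gen_inv_mult[OF assms(1,3) _ _ gen_group.gen_one] assms
  by (auto simp: inverts_mat_def)

section \<open>Elementary matrices generate GL(n)\<close>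

definition unit_columns_upto :: "nat \<Rightarrow> 'a::zero_neq_one mat \<Rightarrow> bool" where
  "unit_columns_upto j B \<longleftrightarrow> (\<forall>i<dim_row B. \<forall>c<j. B $$ (i,c) = (if i = c then 1 else 0))"

lemma unit_columns_upto_0 [simp]: "unit_columns_upto 0 B"
  by (simp add: unit_columns_upto_def)

lemma unit_columns_upto_dim_eq_one:
  "B \<in> carrier_mat n n \<Longrightarrow> unit_columns_upto n B \<Longrightarrow> B = 1\<^sub>m n"
  by (auto simp: unit_columns_upto_def intro!: eq_matI)

lemma unit_columns_upto_addrow:
  assumes "B \<in> carrier_mat n n" "unit_columns_upto j B" "j \<le> l" "l < n"
  shows "unit_columns_upto j (addrow a k l B)"
  using assms by (auto simp: unit_columns_upto_def)

lemma unit_columns_upto_multrow: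
  assumes "B \<in> carrier_mat n n" "unit_columns_upto j B" "j \<le> k" "k < n"
  shows "unit_columns_upto j (multrow k a B)"
  using assms by (auto simp: unit_columns_upto_def)

lemma det_zero_if_no_pivot:
  assumes B: "(B :: 'a::field mat) \<in> carrier_mat n n" and j: "j < n"
    and unit: "unit_columns_upto j B"
    and no_pivot: "\<And>i. j \<le> i \<Longrightarrow> i < n \<Longrightarrow> B $$ (i,j) = 0"
  shows "det B = 0"
proof -
  txt \<open>Column j is the combination of the earlier unit columns with coefficients B(k,j).\<close>
  define v where "v = vec n (\<lambda>k. if k < j then B $$ (k,j) else if k = j then -1 else (0::'a))"
  have v: "v \<in> carrier_vec n" "v \<noteq> 0\<^sub>v n"
    using j by (auto simp: v_def dest!: arg_cong[of _ _ "\<lambda>v. v $ j"])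
  have "B *\<^sub>v v = 0\<^sub>v n"
  proof (rule eq_vecI)
    fix i assume "i < dim_vec (0\<^sub>v n)"
    then have i: "i < n" by simp
    have "(B *\<^sub>v v) $ i = (\<Sum>k\<in>{0..<n}. B $$ (i,k) * v $ k)"
      using B i v by (simp add: scalar_prod_def)
    also have "\<dots> = (\<Sum>k\<in>{0..<n}. (if i < j then (if k = i then B $$ (i,j) else 0) else 0)
                                     - (if k = j then B $$ (i,j) else 0))"
      by (rule sum.cong) (use i unit B in \<open>auto simp: v_def unit_columns_upto_def\<close>)
    also have "\<dots> = 0"
      using i j no_pivot[of i] by (cases "i < j") (simp_all add: sum_subtractf sum_negf)
    finally show "(B *\<^sub>v v) $ i = 0\<^sub>v n $ i" using i by simp
  qed (use B in simp)
  then show ?thesis using det_0_iff_vec_prod_zero[OF B] v by blast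
qed

locale elementary_closed =
  fixes n :: nat and G :: "'a::field mat set"
  assumes one_mem: "1\<^sub>m n \<in> G"
    and mult_mem: "P \<in> G \<Longrightarrow> Q \<in> G \<Longrightarrow> P * Q \<in> G"
    and addrow_mat_mem: "k < n \<Longrightarrow> l < n \<Longrightarrow> k \<noteq> l \<Longrightarrow> addrow_mat n a k l \<in> G"
    and multrow_mat_mem: "k < n \<Longrightarrow> a \<noteq> 0 \<Longrightarrow> multrow_mat n k a \<in> G"
begin

lemma mem_if_addrow_mem:
  assumes B: "B \<in> carrier_mat n n" and kl: "k < n" "l < n" "k \<noteq> l"
    and "addrow a k l B \<in> G"
  shows "B \<in> G"
proof -
  have "addrow_mat n (-a) k l * addrow a k l B = (addrow_mat n (-a) k l * addrow_mat n a k l) * B"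
    using B kl by (simp add: addrow_mat assoc_mult_mat[of _ n n _ n B n])
  also have "\<dots> = B"
    using addrow_mat_inv[OF kl, of "-a"] B by simp
  finally show ?thesis
    using mult_mem[OF addrow_mat_mem[OF kl] assms(5)] by metis
qed

lemma mem_if_multrow_mem:
  assumes B: "B \<in> carrier_mat n n" and k: "k < n" and a: "a \<noteq> 0"
    and "multrow k a B \<in> G"
  shows "B \<in> G"
proof -
  have "multrow_mat n k (inverse a) * multrow k a B
      = (multrow_mat n k (inverse a) * multrow_mat n k a) * B"
    using B k by (simp add: multrow_mat assoc_mult_mat[of _ n n _ n B n])
  also have "\<dots> = B"
    using multrow_mat_inv[OF k, of "inverse a"] a B by simp
  finally show ?thesis
    using mult_mem[OF multrow_mat_mem[OF k] assms(4)] a by (metis inverse_nonzero_iff_nonzero)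
qed

text \<open>One step of Gauss-Jordan elimination, run backwards: column j is brought into unit form,
  assuming every matrix whose first j+1 columns are unit columns already lies in G.\<close>

context
  fixes j :: nat
  assumes j: "j < n"
    and next_column: "\<And>B. B \<in> carrier_mat n n \<Longrightarrow> det B \<noteq> 0 \<Longrightarrow> unit_columns_upto (Suc j) B \<Longrightarrow> B \<in> G"
begin

lemma mem_if_column_zero_from:
  assumes "B \<in> carrier_mat n n" "det B \<noteq> 0" "unit_columns_upto j B" "B $$ (j,j) = 1"
    and "\<And>r. m \<le> r \<Longrightarrow> r < n \<Longrightarrow> r \<noteq> j \<Longrightarrow> B $$ (r,j) = 0"
  shows "B \<in> G"
  using assms
proof (induction m arbitrary: B)
  case 0
  then have "unit_columns_upto (Suc j) B"
    by (auto simp: unit_columns_upto_def less_Suc_eq)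
  then show ?case using next_column 0 by blast
next
  case (Suc m)
  show ?case
  proof (cases "m < n \<and> m \<noteq> j")
    case False
    have "B $$ (r,j) = 0" if "m \<le> r" "r < n" "r \<noteq> j" for r
      using Suc.prems(5)[of r] that False by (cases "r = m") auto
    then show ?thesis using Suc.IH Suc.prems(1-4) by blast
  next
    case True
    let ?B' = "addrow (- B $$ (m,j)) m j B"
    have "?B' $$ (r,j) = 0" if "m \<le> r" "r < n" "r \<noteq> j" for r
      using Suc.prems that j by (cases "r = m") auto
    moreover have "?B' \<in> carrier_mat n n" "det ?B' \<noteq> 0" "unit_columns_upto j ?B'" "?B' $$ (j,j) = 1"
      using Suc.prems j True by (auto simp: det_addrow unit_columns_upto_addrow)
    ultimately have "?B' \<in> G" using Suc.IH by blast
    then show ?thesis using mem_if_addrow_mem Suc.prems(1) True j by blast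
  qed
qed

lemma mem_if_pivot_nonzero:
  assumes B: "B \<in> carrier_mat n n" "det B \<noteq> 0" "unit_columns_upto j B" "B $$ (j,j) \<noteq> 0"
  shows "B \<in> G"
proof -
  let ?B' = "multrow j (inverse (B $$ (j,j))) B"
  have "?B' \<in> G"
    using B j by (intro mem_if_column_zero_from[where m = n]) (auto simp: det_multrow unit_columns_upto_multrow)
  then show ?thesis using mem_if_multrow_mem B j by (meson inverse_nonzero_iff_nonzero)
qed

lemma mem_if_unit_columns_upto:
  assumes B: "B \<in> carrier_mat n n" "det B \<noteq> 0" "unit_columns_upto j B"
  shows "B \<in> G"
proof -
  obtain i where i: "j \<le> i" "i < n" "B $$ (i,j) \<noteq> 0"
    using det_zero_if_no_pivot[OF B(1) j B(3)] B(2) by blast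
  show ?thesis
  proof (cases "B $$ (j,j) = 0")
    case True
    with i have "j \<noteq> i" by auto
    let ?B' = "addrow 1 j i B"
    have "?B' \<in> G"
      using B i j \<open>j \<noteq> i\<close> True
      by (intro mem_if_pivot_nonzero) (auto simp: det_addrow unit_columns_upto_addrow)
    then show ?thesis using mem_if_addrow_mem B(1) i j \<open>j \<noteq> i\<close> by blast
  qed (use mem_if_pivot_nonzero B in blast)
qed

end

lemma det_nonzero_mem:
  assumes "B \<in> carrier_mat n n" "det B \<noteq> 0"
  shows "B \<in> G"
proof -
  have "\<forall>B. B \<in> carrier_mat n n \<longrightarrow> det B \<noteq> 0 \<longrightarrow> unit_columns_upto j B \<longrightarrow> B \<in> G"
    if "j \<le> n" for j
    using that
  proof (induction j rule: inc_induct)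
    case base
    then show ?case using one_mem unit_columns_upto_dim_eq_one by blast
  next
    case (step j)
    then show ?case using mem_if_unit_columns_upto by blast
  qed
  from this[of 0] show ?thesis using assms by simp
qed

lemma GL_subset: "GL n \<subseteq> G"
  using det_nonzero_mem by (auto simp: GL_eq_det_nonzero)

end

lemma w_mat_carrier [simp]:
  "w_mat n \<in> carrier_mat n n" "dim_row (w_mat n) = n" "dim_col (w_mat n) = n"
  by (simp_all add: w_mat_def)

lemma w_mat_index [simp]:
  "i < n \<Longrightarrow> j < n \<Longrightarrow>
     w_mat n $$ (i,j) = (if i = 0 \<and> j = n - 1 then 1 else if i = Suc j then -1 else 0)"
  by (simp add: w_mat_def)

lemma w_mat_mult:
  assumes "dim_row A = n"
  shows "w_mat n * A = mat n (dim_col A) (\<lambda>(r,c). if r = 0 then A $$ (n - 1, c) else - A $$ (r - 1, c))"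
    (is "_ = ?M")
proof (rule eq_matI)
  fix r c assume "r < dim_row ?M" "c < dim_col ?M"
  then have r: "r < n" and c: "c < dim_col A" by auto
  let ?k = "if r = 0 then n - 1 else r - 1"
  have "(w_mat n * A) $$ (r,c) = (\<Sum>k\<in>{0..<n}. w_mat n $$ (r,k) * A $$ (k,c))"
    using r c assms by (simp add: scalar_prod_def)
  also have "\<dots> = (\<Sum>k\<in>{0..<n}. if k = ?k then (if r = 0 then 1 else -1) * A $$ (k,c) else 0)"
    by (rule sum.cong) (use r in auto)
  also have "\<dots> = ?M $$ (r,c)"
    using r c by auto
  finally show "(w_mat n * A) $$ (r,c) = ?M $$ (r,c)" .
qed (use assms in auto)

lemma transpose_w_mat_mult:
  assumes "dim_row A = n"
  shows "(w_mat n)\<^sup>T * A = mat n (dim_col A) (\<lambda>(r,c). if r = n - 1 then A $$ (0, c) else - A $$ (Suc r, c))"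
    (is "_ = ?M")
proof (rule eq_matI)
  fix r c assume "r < dim_row ?M" "c < dim_col ?M"
  then have r: "r < n" and c: "c < dim_col A" by auto
  let ?k = "if r = n - 1 then 0 else Suc r"
  have "((w_mat n)\<^sup>T * A) $$ (r,c) = (\<Sum>k\<in>{0..<n}. (w_mat n)\<^sup>T $$ (r,k) * A $$ (k,c))"
    using r c assms by (simp add: scalar_prod_def)
  also have "\<dots> = (\<Sum>k\<in>{0..<n}. if k = ?k then (if r = n - 1 then 1 else -1) * A $$ (k,c) else 0)"
    by (rule sum.cong) (use r in auto)
  also have "\<dots> = ?M $$ (r,c)"
    using r c by auto
  finally show "((w_mat n)\<^sup>T * A) $$ (r,c) = ?M $$ (r,c)" .
qed (use assms in auto)

lemma addrow_mat_mult:
  "dim_row A = n \<Longrightarrow> l < n \<Longrightarrow> addrow_mat n a k l * A = addrow a k l A"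
  by (intro addrow_mat[symmetric] carrier_matI) auto

lemma multrow_mat_mult:
  "dim_row A = n \<Longrightarrow> multrow_mat n k a * A = multrow k a A"
  by (intro multrow_mat[symmetric] carrier_matI) auto

text \<open>Not [simp]: these evaluate products into explicit matrices, which is wanted only for
  identities checked entrywise. Such identities are stated right-nested, so that the rules
  evaluate the product from the inside out.\<close>
lemmas mult_row_op_simps = addrow_mat_mult multrow_mat_mult w_mat_mult transpose_w_mat_mult

lemma w_mat_conj_addrow_mat:
  "Suc (Suc i) < n \<Longrightarrow>
     w_mat n * (addrow_mat n (a::'a::field) i (Suc i) * (w_mat n)\<^sup>T) = addrow_mat n a (Suc i) (Suc (Suc i))"
  by (rule eq_matI) (auto simp: mult_row_op_simps)

lemma w_mat_conj_multrow_mat: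
  "Suc k < n \<Longrightarrow> w_mat n * (multrow_mat n k (a::'a::field) * (w_mat n)\<^sup>T) = multrow_mat n (Suc k) a"
  by (rule eq_matI) (auto simp: mult_row_op_simps)

lemma multrow_mat_conj_addrow_mat:
  assumes "0 < k" "k < n" "(b::'a::field) \<noteq> 0"
  shows "multrow_mat n 0 b * (addrow_mat n a k 0 * multrow_mat n 0 (inverse b)) = addrow_mat n (a / b) k 0"
  using assms by (intro eq_matI) (auto simp: mult_row_op_simps field_simps)

lemma addrow_mat_commutator:
  assumes "i < n" "k < n" "j < n" "i \<noteq> k" "k \<noteq> j" "i \<noteq> j"
  shows "addrow_mat n a i k * (addrow_mat n b k j * (addrow_mat n (-a) i k * addrow_mat n (-b) k j))
    = addrow_mat n (a * b :: 'a::field) i j"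
  using assms by (intro eq_matI) (auto simp: mult_row_op_simps field_simps)

section \<open>The two generators\<close>

locale GL_two_generators =
  fixes n :: nat and \<xi> :: "'a::field"
  assumes two_le_n: "2 \<le> n"
    and \<xi>_nonzero: "\<xi> \<noteq> 0" and \<xi>_not_one: "\<xi> \<noteq> 1"
    and \<xi>_generates: "\<And>a. a \<noteq> 0 \<Longrightarrow> \<exists>k. \<xi> ^ k = a"
begin

definition b :: "'a mat" where
  "b = addrow_mat n 1 0 1 * w_mat n"

definition b_inv :: "'a mat" where
  "b_inv = (w_mat n)\<^sup>T * addrow_mat n (-1) 0 1"

lemma b_carrier [simp]: "b \<in> carrier_mat n n" "dim_row b = n" "dim_col b = n"
  and b_inv_carrier [simp]: "b_inv \<in> carrier_mat n n" "dim_row b_inv = n" "dim_col b_inv = n"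
  by (auto simp: b_def b_inv_def)

lemma b_mult: "dim_row M = n \<Longrightarrow> b * M = addrow_mat n 1 0 1 * (w_mat n * M)"
  unfolding b_def by (rule assoc_mult_mat[of _ n n _ n M "dim_col M"]) auto

lemma b_inv_mult: "dim_row M = n \<Longrightarrow> b_inv * M = (w_mat n)\<^sup>T * (addrow_mat n (-1) 0 1 * M)"
  unfolding b_inv_def by (rule assoc_mult_mat[of _ n n _ n M "dim_col M"]) auto

lemmas mult_generator_simps = mult_row_op_simps b_mult b_inv_mult

lemma b_index [simp]:
  "i < n \<Longrightarrow> j < n \<Longrightarrow> b $$ (i,j) =
     (if i = 0 then (if j = n - 1 then 1 else 0) - (if j = 0 then 1 else 0)
      else if i = Suc j then -1 else 0)"
  using two_le_n by (auto simp: b_def mult_row_op_simps)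

lemma b_inv_index [simp]:
  "i < n \<Longrightarrow> j < n \<Longrightarrow> b_inv $$ (i,j) =
     (if i = n - 1 then (if j = 0 then 1 else 0) - (if j = 1 then 1 else 0)
      else if j = Suc i then -1 else 0)"
  using two_le_n by (auto simp: b_inv_def mult_row_op_simps)

lemma b_mult_b_inv: "b * b_inv = 1\<^sub>m n"
  using two_le_n by (intro eq_matI) (auto simp: mult_generator_simps)

lemma b_inv_mult_b: "b_inv * b = 1\<^sub>m n"
  using two_le_n by (intro eq_matI) (auto simp: mult_generator_simps)

lemma word_eq_addrow_mat_last_first:
  "multrow_mat n 0 \<xi> * (b_inv * (multrow_mat n 0 \<xi> * (b * (multrow_mat n 0 (inverse \<xi>)
     * (b_inv * (multrow_mat n 0 (inverse \<xi>) * b))))))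
   = addrow_mat n ((\<xi> - 1)\<^sup>2 / \<xi>) (n - 1) 0"
  using two_le_n \<xi>_nonzero by (intro eq_matI) (auto simp: mult_generator_simps field_simps power2_eq_square)

lemma b_conj_addrow_mat: "b * (addrow_mat n a (n - 1) 0 * b_inv) = addrow_mat n (-a) 0 1"
  using two_le_n by (intro eq_matI) (auto simp: mult_generator_simps)

lemma w_mat_eq: "addrow_mat n (-1) 0 1 * b = w_mat n"
  using two_le_n by (intro eq_matI) (auto simp: mult_generator_simps)

lemma transpose_w_mat_eq: "b_inv * addrow_mat n 1 0 1 = (w_mat n)\<^sup>T"
  using two_le_n by (intro eq_matI) (auto simp: mult_generator_simps)

definition G :: "'a mat set" where
  "G = gen_group n {multrow_mat n 0 \<xi>, b}"

lemma generators_carrier: "{multrow_mat n 0 \<xi>, b} \<subseteq> carrier_mat n n"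
  by auto

lemma one_mem: "1\<^sub>m n \<in> G"
  unfolding G_def by (rule gen_group.gen_one)

lemma mult_mem: "P \<in> G \<Longrightarrow> Q \<in> G \<Longrightarrow> P * Q \<in> G"
  unfolding G_def by (rule gen_group_mult[OF generators_carrier])

lemma h_mem: "multrow_mat n 0 \<xi> \<in> G"
  unfolding G_def by (rule gen_group_generator[OF generators_carrier]) simp

lemma b_mem: "b \<in> G"
  unfolding G_def by (rule gen_group_generator[OF generators_carrier]) simp

lemma b_inv_mem: "b_inv \<in> G"
  unfolding G_def
  by (rule gen_group_generator_inverse[of b]) (simp_all add: b_mult_b_inv b_inv_mult_b)

lemma multrow_mat_0_mem:
  assumes "a \<noteq> 0"
  shows "multrow_mat n 0 a \<in> G"
proof -
  have "multrow_mat n 0 (\<xi> ^ k) \<in> G" for k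
  proof (induction k)
    case 0
    have "multrow_mat n 0 1 = (1\<^sub>m n :: 'a mat)" by (rule eq_matI) auto
    then show ?case using one_mem by simp
  next
    case (Suc k)
    have "multrow_mat n 0 (\<xi> ^ Suc k) = multrow_mat n 0 \<xi> * multrow_mat n 0 (\<xi> ^ k)"
      by (rule eq_matI) (auto simp: mult_row_op_simps)
    then show ?case using mult_mem[OF h_mem Suc.IH] by simp
  qed
  then show ?thesis using \<xi>_generates[OF assms] by blast
qed

lemma addrow_mat_last_first_mem: "addrow_mat n a (n - 1) 0 \<in> G"
proof (cases "a = 0")
  case True
  have "addrow_mat n 0 (n - 1) 0 = (1\<^sub>m n :: 'a mat)" by (rule eq_matI) auto
  then show ?thesis using True one_mem by simp
next
  case False
  define c where "c = (\<xi> - 1)\<^sup>2 / \<xi>"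
  have "c \<noteq> 0" using \<xi>_nonzero \<xi>_not_one by (simp add: c_def)
  have "addrow_mat n c (n - 1) 0 \<in> G"
    unfolding c_def word_eq_addrow_mat_last_first[symmetric]
    using \<xi>_nonzero by (intro mult_mem b_mem b_inv_mem multrow_mat_0_mem) auto
  moreover have "multrow_mat n 0 (c / a) * (addrow_mat n c (n - 1) 0 * multrow_mat n 0 (inverse (c / a)))
      = addrow_mat n a (n - 1) 0"
    using two_le_n \<open>c \<noteq> 0\<close> False by (subst multrow_mat_conj_addrow_mat) auto
  ultimately show ?thesis
    using \<open>c \<noteq> 0\<close> False by (metis mult_mem multrow_mat_0_mem divide_eq_0_iff inverse_nonzero_iff_nonzero)
qed

lemma addrow_mat_0_1_mem: "addrow_mat n a 0 1 \<in> G"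
proof -
  have "b * (addrow_mat n (-a) (n - 1) 0 * b_inv) \<in> G"
    by (intro mult_mem b_mem b_inv_mem addrow_mat_last_first_mem)
  then show ?thesis by (simp only: b_conj_addrow_mat minus_minus)
qed

lemma w_mat_mem: "w_mat n \<in> G"
proof -
  have "addrow_mat n (-1) 0 1 * b \<in> G"
    by (intro mult_mem b_mem addrow_mat_0_1_mem)
  then show ?thesis by (simp only: w_mat_eq)
qed

lemma transpose_w_mat_mem: "(w_mat n)\<^sup>T \<in> G"
proof -
  have "b_inv * addrow_mat n 1 0 1 \<in> G"
    by (intro mult_mem b_inv_mem addrow_mat_0_1_mem)
  then show ?thesis by (simp only: transpose_w_mat_eq)
qed

lemma addrow_mat_succ_mem: "Suc i < n \<Longrightarrow> addrow_mat n a i (Suc i) \<in> G"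
proof (induction i)
  case 0
  then show ?case using addrow_mat_0_1_mem by simp
next
  case (Suc i)
  then have "w_mat n * (addrow_mat n a i (Suc i) * (w_mat n)\<^sup>T) \<in> G"
    by (intro mult_mem w_mat_mem transpose_w_mat_mem) simp
  then show ?case using Suc.prems by (simp add: w_mat_conj_addrow_mat)
qed

lemma addrow_mat_mem_if_path:
  assumes "i < n" "k < n" "j < n" "i \<noteq> k" "k \<noteq> j" "i \<noteq> j"
    and "\<And>a. addrow_mat n a i k \<in> G" "\<And>a. addrow_mat n a k j \<in> G"
  shows "addrow_mat n a i j \<in> G"
proof -
  have "addrow_mat n a i k * (addrow_mat n 1 k j * (addrow_mat n (-a) i k * addrow_mat n (-1) k j)) \<in> G"
    by (intro mult_mem assms(7,8))
  then show ?thesis using addrow_mat_commutator[OF assms(1-6), of a 1] by simp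
qed

lemma addrow_mat_upper_mem: "i < j \<Longrightarrow> j < n \<Longrightarrow> addrow_mat n a i j \<in> G"
proof (induction j arbitrary: a)
  case 0
  then show ?case by simp
next
  case (Suc j)
  show ?case
  proof (cases "i = j")
    case True
    then show ?thesis using Suc.prems addrow_mat_succ_mem by simp
  next
    case False
    with Suc.prems have ij: "i < j" "Suc j < n" by auto
    show ?thesis
    proof (rule addrow_mat_mem_if_path[of i j "Suc j"])
      show "addrow_mat n a' i j \<in> G" for a'
        using Suc.IH ij by simp
      show "addrow_mat n a' j (Suc j) \<in> G" for a'
        using addrow_mat_succ_mem ij(2) .
    qed (use ij in auto)
  qed
qed

lemma addrow_mat_first_col_mem:
  assumes "0 < k" "k < n"
  shows "addrow_mat n a k 0 \<in> G"
proof (cases "k = n - 1")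
  case True
  then show ?thesis using addrow_mat_last_first_mem by simp
next
  case False
  show ?thesis
  proof (rule addrow_mat_mem_if_path[of k "n - 1" 0])
    show "addrow_mat n a' k (n - 1) \<in> G" for a'
      using assms False by (intro addrow_mat_upper_mem) auto
    show "addrow_mat n a' (n - 1) 0 \<in> G" for a'
      by (rule addrow_mat_last_first_mem)
  qed (use assms False in auto)
qed

lemma addrow_mat_mem:
  assumes "k < n" "l < n" "k \<noteq> l"
  shows "addrow_mat n a k l \<in> G"
proof -
  consider "k < l" | "l = 0" | "0 < l" "l < k"
    using assms(3) by linarith
  then show ?thesis
  proof cases
    case 1
    then show ?thesis using assms addrow_mat_upper_mem by blast
  next
    case 2
    then show ?thesis using assms addrow_mat_first_col_mem by auto
  next
    case 3
    show ?thesis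
    proof (rule addrow_mat_mem_if_path[of k 0 l])
      show "addrow_mat n a' k 0 \<in> G" for a'
        using assms 3 by (intro addrow_mat_first_col_mem) auto
      show "addrow_mat n a' 0 l \<in> G" for a'
        using assms 3 by (intro addrow_mat_upper_mem) auto
    qed (use assms 3 in auto)
  qed
qed

lemma multrow_mat_mem: "k < n \<Longrightarrow> a \<noteq> 0 \<Longrightarrow> multrow_mat n k a \<in> G"
proof (induction k)
  case 0
  then show ?case using multrow_mat_0_mem by simp
next
  case (Suc k)
  then have "w_mat n * (multrow_mat n k a * (w_mat n)\<^sup>T) \<in> G"
    by (intro mult_mem w_mat_mem transpose_w_mat_mem) simp
  then show ?case using Suc.prems by (simp add: w_mat_conj_multrow_mat)
qed

lemma G_eq_GL: "G = GL n"
proof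
  have "multrow_mat n 0 \<xi> \<in> GL n"
    using multrow_mat_inv[of 0 n \<xi>] two_le_n \<xi>_nonzero
    by (intro GL_if_right_inverse[of _ n "multrow_mat n 0 (inverse \<xi>)"]) auto
  moreover have "b \<in> GL n"
    by (rule GL_if_right_inverse[OF _ _ b_mult_b_inv]) simp_all
  ultimately have "{multrow_mat n 0 \<xi>, b} \<subseteq> GL n" by simp
  then show "G \<subseteq> GL n"
    unfolding G_def by (rule gen_group_subset_GL)
next
  interpret elementary_closed n G
    by unfold_locales (auto intro: one_mem mult_mem addrow_mat_mem multrow_mat_mem)
  show "GL n \<subseteq> G"
    by (rule GL_subset)
qed

end

lemma h_mat_eq_multrow_mat: "h_mat n k a = multrow_mat n k a"
  by (rule eq_matI) (auto simp: h_mat_def)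

lemma x_mat_eq_addrow_mat: "x_mat n k l a = addrow_mat n a k l"
  by (rule eq_matI) (auto simp: x_mat_def E_mat_def)

theorem mainTheorem1:
  fixes n :: nat and \<xi> :: "'a::{field,finite}"
  assumes "n \<ge> 2"
    and "card (UNIV :: 'a set) \<noteq> 2"
    and "{\<xi> ^ k | k. k \<in> (UNIV :: nat set)} = UNIV - {0}"
  shows "gen_group n {h_mat n 0 \<xi>, x_mat n 0 1 (1::'a) * w_mat n} = (GL n :: 'a mat set)"
proof -
  have generates: "\<exists>k. \<xi> ^ k = a" if "a \<noteq> 0" for a
  proof -
    have "a \<in> {\<xi> ^ k | k. k \<in> (UNIV :: nat set)}" using assms(3) that by blast
    then show ?thesis by blast
  qed
  have "\<xi> ^ 1 \<in> UNIV - {0}"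
    unfolding assms(3)[symmetric] by blast
  then have "\<xi> \<noteq> 0" by simp
  moreover have "\<xi> \<noteq> 1"
  proof
    assume "\<xi> = 1"
    then have "UNIV = {0, 1 :: 'a}" using generates by fastforce
    then have "card (UNIV :: 'a set) = card {0, 1 :: 'a}" by (rule arg_cong)
    with assms(2) show False by simp
  qed
  ultimately interpret GL_two_generators n \<xi>
    using assms(1) generates by unfold_locales
  show ?thesis
    using G_eq_GL unfolding G_def b_def h_mat_eq_multrow_mat x_mat_eq_addrow_mat .
qed

end
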